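(* Let $T$ be a tree on $n$ vertices. Then $k(T)=3$ if and only if $T\in\mathcal{T}$, where $\mathcal{T}$ is the family of trees obtained by appending $b\ge 1$ pendent vertices to each leaf of a star, or to each leaf of a balanced double star (the same $b$ for every leaf).
   Context: For a connected graph $G=(V,E)$ and $v\in V$, the status of $v$ is $s(v)=\sum_{u\in V} d(v,u)$, where $d$ is the shortest-path distance; $k(G)$ is the number of distinct status values of vertices of $G$. A star is a tree of diameter $2$, i.e. $K_{1,m}$ with $m\ge 2$. A balanced double star is a graph obtained from $K_2$ by appending $a\ge 1$ pendent vertices to each of its two vertices (the same $a$ for both). *)

theory Defs
  imports Main
begin

definition simple_graph :: "'a set \<Rightarrow> ('a \<Rightarrow> 'a \<Rightarrow> bool) \<Rightarrow> bool" where
  "simple_graph V E \<longleftrightarrow> finite V \<and> (\<forall>x y. E x y \<longrightarrow> x \<in> V \<and> y \<in> V)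
     \<and> (\<forall>x y. E x y \<longrightarrow> E y x) \<and> (\<forall>x. \<not> E x x)"

definition is_walk :: "'a set \<Rightarrow> ('a \<Rightarrow> 'a \<Rightarrow> bool) \<Rightarrow> 'a list \<Rightarrow> bool" where
  "is_walk V E xs \<longleftrightarrow> xs \<noteq> [] \<and> set xs \<subseteq> V
     \<and> (\<forall>i. Suc i < length xs \<longrightarrow> E (xs ! i) (xs ! Suc i))"

definition connected_graph :: "'a set \<Rightarrow> ('a \<Rightarrow> 'a \<Rightarrow> bool) \<Rightarrow> bool" where
  "connected_graph V E \<longleftrightarrow> V \<noteq> {} \<and>
     (\<forall>u\<in>V. \<forall>v\<in>V. \<exists>xs. is_walk V E xs \<and> hd xs = u \<and> last xs = v)"

definition has_cycle :: "'a set \<Rightarrow> ('a \<Rightarrow> 'a \<Rightarrow> bool) \<Rightarrow> bool" where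
  "has_cycle V E \<longleftrightarrow> (\<exists>xs. is_walk V E xs \<and> distinct xs \<and> length xs \<ge> 3 \<and> E (last xs) (hd xs))"

definition is_tree :: "'a set \<Rightarrow> ('a \<Rightarrow> 'a \<Rightarrow> bool) \<Rightarrow> bool" where
  "is_tree V E \<longleftrightarrow> simple_graph V E \<and> connected_graph V E \<and> \<not> has_cycle V E"

definition dist :: "'a set \<Rightarrow> ('a \<Rightarrow> 'a \<Rightarrow> bool) \<Rightarrow> 'a \<Rightarrow> 'a \<Rightarrow> nat" where
  "dist V E u v = (LEAST n. \<exists>xs. is_walk V E xs \<and> hd xs = u \<and> last xs = v \<and> length xs = Suc n)"

definition status :: "'a set \<Rightarrow> ('a \<Rightarrow> 'a \<Rightarrow> bool) \<Rightarrow> 'a \<Rightarrow> nat" where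
  "status V E v = (\<Sum>u\<in>V. dist V E v u)"

definition num_status :: "'a set \<Rightarrow> ('a \<Rightarrow> 'a \<Rightarrow> bool) \<Rightarrow> nat" where
  "num_status V E = card (status V E ` V)"

text \<open>Model graphs of the family: c centres forming a clique (c = 1: star centre;
  c = 2: the K2 of a double star), each centre s carries l leaves Lf s i, and each
  such leaf carries b pendent vertices Pd s i j.\<close>
datatype mvtx = Ctr nat | Lf nat nat | Pd nat nat nat

definition model_verts :: "nat \<Rightarrow> nat \<Rightarrow> nat \<Rightarrow> mvtx set" where
  "model_verts c l b = {Ctr s | s. s < c} \<union> {Lf s i | s i. s < c \<and> i < l}
     \<union> {Pd s i j | s i j. s < c \<and> i < l \<and> j < b}"

fun model_adj0 :: "mvtx \<Rightarrow> mvtx \<Rightarrow> bool" where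
  "model_adj0 (Ctr s) (Ctr t) = (s < t)"
| "model_adj0 (Ctr s) (Lf t i) = (s = t)"
| "model_adj0 (Lf s i) (Pd t i' j) = (s = t \<and> i = i')"
| "model_adj0 _ _ = False"

definition model_adj :: "nat \<Rightarrow> nat \<Rightarrow> nat \<Rightarrow> mvtx \<Rightarrow> mvtx \<Rightarrow> bool" where
  "model_adj c l b x y \<longleftrightarrow> x \<in> model_verts c l b \<and> y \<in> model_verts c l b
     \<and> (model_adj0 x y \<or> model_adj0 y x)"

definition in_family :: "'a set \<Rightarrow> ('a \<Rightarrow> 'a \<Rightarrow> bool) \<Rightarrow> bool" where
  "in_family V E \<longleftrightarrow> (\<exists>c l b. b \<ge> 1 \<and> ((c = 1 \<and> l \<ge> 2) \<or> (c = 2 \<and> l \<ge> 1)) \<and>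
     (\<exists>f. bij_betw f V (model_verts c l b) \<and>
          (\<forall>x\<in>V. \<forall>y\<in>V. E x y \<longleftrightarrow> model_adj c l b (f x) (f y))))"

end

theory Submission
  imports Defs
begin

(* For an edge u v of a tree on n vertices, s(v) - s(u) = n - 2 |T_v|, where the branch T_v consists
   of the vertices closer to v than to u. Branches shrink strictly along a path, so the status is
   strictly convex along every path in the tree.

   If k(T) = 3, let c have minimum status and let c' be a neighbour of c of the same status if there
   is one, c' = c otherwise. By convexity the status increases strictly along every path leaving
   {c, c'}, so three values leave room for only two layers around the centre: the other neighbours
   of c and c' ("middle" vertices) and their further neighbours, which must be leaves ("pendant"
   vertices). Comparing statuses shows that all middle vertices carry the same number b of pendant
   vertices, and s(c) = s(c') gives both centres the same number of middle vertices. Conversely, in a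
   tree of this shape the branch sizes yield exactly the three statuses s(c), s(c) + n - 2 - 2b and
   s(c) + 2n - 4 - 2b. *)

section \<open>Walks and distances\<close>

lemma is_walk_simps [simp]:
  "\<not> is_walk V E []"
  "is_walk V E [x] \<longleftrightarrow> x \<in> V"
  "is_walk V E (x # y # xs) \<longleftrightarrow> x \<in> V \<and> E x y \<and> is_walk V E (y # xs)"
  unfolding is_walk_def by (auto simp: nth_Cons split: nat.splits)

lemma is_walk_append:
  "xs \<noteq> [] \<Longrightarrow> ys \<noteq> [] \<Longrightarrow>
    is_walk V E (xs @ ys) \<longleftrightarrow> is_walk V E xs \<and> is_walk V E ys \<and> E (last xs) (hd ys)"
  by (induction xs rule: induct_list012) (auto simp: neq_Nil_conv)

lemma is_walk_snoc:
  "xs \<noteq> [] \<Longrightarrow> is_walk V E (xs @ [y]) \<longleftrightarrow> is_walk V E xs \<and> y \<in> V \<and> E (last xs) y"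
  using is_walk_append[of xs "[y]"] by auto

lemma is_walk_rev:
  assumes "\<And>x y. E x y \<Longrightarrow> E y x" and "is_walk V E xs"
  shows "is_walk V E (rev xs)"
  using assms(2)
proof (induction xs rule: induct_list012)
  case (3 x y zs)
  then show ?case using is_walk_snoc[where xs="rev (y # zs)" and y=x] assms(1) by simp
qed simp_all

lemma walk_in_V: "is_walk V E xs \<Longrightarrow> set xs \<subseteq> V"
  unfolding is_walk_def by blast

definition neighbours :: "('a \<Rightarrow> 'a \<Rightarrow> bool) \<Rightarrow> 'a \<Rightarrow> 'a set" where
  "neighbours E x = {y. E x y}"

lemma mem_neighbours [simp]: "y \<in> neighbours E x \<longleftrightarrow> E x y"
  by (simp add: neighbours_def)

locale connected_simple_graph =
  fixes V :: "'a set" and E :: "'a \<Rightarrow> 'a \<Rightarrow> bool"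
  assumes simple: "simple_graph V E" and connected: "connected_graph V E"
begin

lemma edge_sym: "E x y \<Longrightarrow> E y x"
  using simple by (simp add: simple_graph_def)

lemma edge_in_V:
  assumes "E x y" shows "x \<in> V" "y \<in> V"
  using simple assms by (simp_all add: simple_graph_def)

lemma edge_irrefl: "\<not> E x x"
  using simple by (simp add: simple_graph_def)

lemma finite_V: "finite V"
  using simple by (simp add: simple_graph_def)

lemma finite_neighbours: "finite (neighbours E x)"
  by (rule finite_subset[OF _ finite_V]) (auto dest: edge_in_V)

lemma dist_walk_less:
  assumes "is_walk V E xs" shows "dist V E (hd xs) (last xs) < length xs"
proof -
  have "length xs = Suc (length xs - 1)"
    using assms by (cases xs) auto
  then have "dist V E (hd xs) (last xs) \<le> length xs - 1"
    unfolding dist_def using assms by (intro Least_le) blast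
  then show ?thesis
    using \<open>length xs = Suc (length xs - 1)\<close> by linarith
qed

lemma shortest_walk:
  assumes "u \<in> V" "v \<in> V"
  obtains xs where "is_walk V E xs" "hd xs = u" "last xs = v" "length xs = Suc (dist V E u v)"
proof -
  obtain xs where xs: "is_walk V E xs" "hd xs = u" "last xs = v"
    using connected assms unfolding connected_graph_def by blast
  then have "length xs = Suc (length xs - 1)"
    by (cases xs) auto
  with xs have "\<exists>n xs. is_walk V E xs \<and> hd xs = u \<and> last xs = v \<and> length xs = Suc n"
    by blast
  from LeastI_ex[OF this] that show ?thesis
    unfolding dist_def by blast
qed

lemma dist_self: "u \<in> V \<Longrightarrow> dist V E u u = 0"
  using dist_walk_less[of "[u]"] by simp

lemma dist_eq_0_iff:
  assumes "u \<in> V" "v \<in> V" shows "dist V E u v = 0 \<longleftrightarrow> u = v"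
proof
  assume "dist V E u v = 0"
  with assms obtain xs where "is_walk V E xs" "hd xs = u" "last xs = v" "length xs = 1"
    by (metis One_nat_def shortest_walk)
  then show "u = v"
    by (cases xs) auto
qed (use assms dist_self in simp)

lemma dist_commute:
  assumes "u \<in> V" "v \<in> V" shows "dist V E u v = dist V E v u"
proof -
  have le: "dist V E y x \<le> dist V E x y" if xy: "x \<in> V" "y \<in> V" for x y
  proof -
    obtain xs where xs: "is_walk V E xs" "hd xs = x" "last xs = y" "length xs = Suc (dist V E x y)"
      using shortest_walk[OF xy] by blast
    then have "xs \<noteq> []" by auto
    with xs dist_walk_less[OF is_walk_rev[OF edge_sym xs(1)]] show ?thesis
      by (simp add: hd_rev last_rev)
  qed
  show ?thesis
    using le[OF assms] le[OF assms(2,1)] by simp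
qed

lemma dist_triangle:
  assumes "u \<in> V" "v \<in> V" "w \<in> V"
  shows "dist V E u w \<le> dist V E u v + dist V E v w"
proof -
  obtain xs where xs: "is_walk V E xs" "hd xs = u" "last xs = v" "length xs = Suc (dist V E u v)"
    using shortest_walk assms by blast
  obtain ys where ys: "is_walk V E ys" "hd ys = v" "last ys = w" "length ys = Suc (dist V E v w)"
    using shortest_walk assms by blast
  show ?thesis
  proof (cases "tl ys = []")
    case True
    then have "v = w"
      using ys by (cases ys) auto
    then show ?thesis by simp
  next
    case False
    then obtain y ys' where ys_eq: "ys = v # y # ys'"
      using ys(2) by (cases ys; cases "tl ys") auto
    have "xs \<noteq> []" using xs by auto
    then have "is_walk V E (xs @ tl ys)"
      using xs ys ys_eq by (simp add: is_walk_append)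
    from dist_walk_less[OF this] show ?thesis
      using xs ys ys_eq \<open>xs \<noteq> []\<close> by simp
  qed
qed

lemma dist_edge: "E u v \<Longrightarrow> dist V E u v = 1"
  using dist_walk_less[of "[u, v]"] dist_eq_0_iff[of u v] edge_in_V[of u v] edge_irrefl[of u]
  by fastforce

lemma dist_edge_le:
  assumes "E u v" "x \<in> V" shows "dist V E x u \<le> dist V E x v + 1"
  using dist_triangle[of x v u] dist_edge[OF edge_sym[OF assms(1)]] edge_in_V[OF assms(1)] assms(2)
  by simp

lemma dist_predecessor:
  assumes "x \<in> V" "y \<in> V" "dist V E x y = Suc k"
  obtains u where "E u y" "dist V E x u = k"
proof -
  obtain xs where xs: "is_walk V E xs" "hd xs = x" "last xs = y" "length xs = Suc (Suc k)"
    using shortest_walk assms by metis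
  let ?u = "last (butlast xs)"
  have split: "xs = butlast xs @ [y]" and ne: "butlast xs \<noteq> []"
    using xs by (cases xs rule: rev_cases; auto)+
  have walk: "is_walk V E (butlast xs)" and "E ?u y"
    using xs(1) split ne is_walk_snoc by metis+
  have "dist V E x ?u \<le> k"
    using dist_walk_less[OF walk] xs ne split by (metis hd_append2 length_butlast diff_Suc_1 less_Suc_eq_le)
  moreover have "Suc k \<le> dist V E x ?u + 1"
    using dist_edge_le[OF edge_sym[OF \<open>E ?u y\<close>] assms(1)] assms(3) by simp
  ultimately show ?thesis
    using that \<open>E ?u y\<close> by simp
qed

lemma connected_induct:
  assumes "c \<in> V" "P c" "\<And>x y. P x \<Longrightarrow> E x y \<Longrightarrow> P y" "x \<in> V"
  shows "P x"
  using assms(4)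
proof (induction "dist V E c x" arbitrary: x)
  case 0
  then show ?case using assms(1,2) dist_eq_0_iff by metis
next
  case (Suc k)
  then obtain u where "E u x" "dist V E c u = k"
    using dist_predecessor[OF assms(1)] by metis
  then show ?case
    using Suc.hyps(1) assms(3) edge_in_V edge_sym by metis
qed

end

section \<open>Branches and statuses in trees\<close>

locale tree_graph = connected_simple_graph +
  assumes acyclic: "\<not> has_cycle V E"

lemma tree_graph_iff_is_tree: "tree_graph V E \<longleftrightarrow> is_tree V E"
  by (auto simp: tree_graph_def tree_graph_axioms_def connected_simple_graph_def is_tree_def)

text \<open>For an edge \<open>x y\<close> of a tree, \<open>branch V E y x\<close> is the vertex set of the component
  of \<open>T - x y\<close> containing \<open>y\<close>.\<close>

definition branch :: "'a set \<Rightarrow> ('a \<Rightarrow> 'a \<Rightarrow> bool) \<Rightarrow> 'a \<Rightarrow> 'a \<Rightarrow> 'a set" where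
  "branch V E y x = {z \<in> V. dist V E z y < dist V E z x}"

context tree_graph
begin

text \<open>Extending such a path at both ends by predecessors towards \<open>x\<close> eventually closes a cycle.\<close>

lemma no_path_above_level:
  assumes "x \<in> V" "p \<noteq> q" "dist V E x p = k" "dist V E x q = k"
    and "is_walk V E R" "distinct R" "hd R = p" "last R = q" "\<forall>y\<in>set R. k \<le> dist V E x y"
  shows False
  using assms(2-)
proof (induction k arbitrary: p q R)
  case 0
  have "p \<in> V" "q \<in> V"
    using 0 walk_in_V by (metis hd_in_set last_in_set is_walk_simps(1) subsetD)+
  then show ?case using 0 dist_eq_0_iff assms(1) by metis
next
  case (Suc k)
  have R_ne: "R \<noteq> []" using Suc.prems by auto
  have "p \<in> V" "q \<in> V"
    using Suc.prems R_ne walk_in_V by (metis hd_in_set last_in_set subsetD)+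
  obtain p' where p': "E p' p" "dist V E x p' = k"
    using dist_predecessor[OF assms(1) \<open>p \<in> V\<close>] Suc.prems by blast
  obtain q' where q': "E q' q" "dist V E x q' = k"
    using dist_predecessor[OF assms(1) \<open>q \<in> V\<close>] Suc.prems by blast
  have "p' \<in> V" "q' \<in> V" using p' q' edge_in_V by auto
  have "p' \<notin> set R" "q' \<notin> set R" using Suc.prems p' q' by fastforce+
  show ?case
  proof (cases "p' = q'")
    case True
    have "length R \<ge> 2"
      using Suc.prems R_ne by (cases R rule: remdups_adj.cases) auto
    moreover have "is_walk V E (p' # R)"
      using Suc.prems R_ne p' \<open>p' \<in> V\<close> by (cases R) auto
    moreover have "E (last (p' # R)) (hd (p' # R))"
      using Suc.prems R_ne edge_sym[OF q'(1)] True by simp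
    ultimately have "has_cycle V E"
      unfolding has_cycle_def using Suc.prems \<open>p' \<notin> set R\<close> by (intro exI[of _ "p' # R"]) simp
    then show False using acyclic by blast
  next
    case False
    let ?R = "p' # R @ [q']"
    have "is_walk V E (R @ [q'])"
      using is_walk_snoc[OF R_ne] Suc.prems \<open>q' \<in> V\<close> edge_sym[OF q'(1)] by simp
    then have "is_walk V E ?R"
      using Suc.prems R_ne p' \<open>p' \<in> V\<close> by (cases R) auto
    moreover have "distinct ?R"
      using Suc.prems \<open>p' \<notin> set R\<close> \<open>q' \<notin> set R\<close> False by simp
    moreover have "\<forall>y\<in>set ?R. k \<le> dist V E x y"
      using Suc.prems p' q' by force
    ultimately show False
      using Suc.IH[of p' q' ?R] False p' q' R_ne by simp
  qed
qed

lemma dist_adjacent_neq: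
  assumes "E u v" "x \<in> V" shows "dist V E x u \<noteq> dist V E x v"
proof
  assume eq: "dist V E x u = dist V E x v"
  have "u \<noteq> v" using assms(1) edge_irrefl by metis
  then show False
    using no_path_above_level[OF assms(2) \<open>u \<noteq> v\<close> refl eq[symmetric], of "[u, v]"]
      assms(1) edge_in_V[OF assms(1)] eq by simp
qed

lemma unique_closer_neighbour:
  assumes "E u v" "E v w" "x \<in> V" "dist V E x u < dist V E x v" "dist V E x w < dist V E x v"
  shows "u = w"
proof (rule ccontr)
  assume "u \<noteq> w"
  have eq: "dist V E x u = dist V E x w"
    using assms(4,5) dist_edge_le[OF assms(2) assms(3)] dist_edge_le[OF edge_sym[OF assms(1)] assms(3)]
    by linarith
  have "u \<noteq> v" "v \<noteq> w" using assms(1,2) edge_irrefl by metis+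
  then show False
    using no_path_above_level[OF assms(3) \<open>u \<noteq> w\<close> refl eq[symmetric], of "[u, v, w]"]
      assms edge_in_V[OF assms(1)] edge_in_V[OF assms(2)] \<open>u \<noteq> w\<close> eq by auto
qed

lemma finite_branch: "finite (branch V E y x)"
  using finite_V unfolding branch_def by simp

lemma branch_Un:
  assumes "E u v" shows "branch V E u v \<union> branch V E v u = V"
  using dist_adjacent_neq[OF assms] unfolding branch_def by (auto simp: nat_neq_iff)

lemma branch_disjoint: "branch V E u v \<inter> branch V E v u = {}"
  unfolding branch_def by auto

lemma card_branches_edge:
  assumes "E u v" shows "card (branch V E u v) + card (branch V E v u) = card V"
  using card_Un_disjoint[OF finite_branch finite_branch branch_disjoint[of u v]] branch_Un[OF assms]
  by simp

text \<open>Crossing the edge \<open>u v\<close> brings every vertex of \<open>branch V E v u\<close> one step closer and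
  moves every other vertex one step away.\<close>

lemma status_edge_diff:
  assumes "E u v"
  shows "int (status V E v) - int (status V E u) = int (card V) - 2 * int (card (branch V E v u))"
proof -
  have "u \<in> V" "v \<in> V" using edge_in_V[OF assms] .
  have step: "int (dist V E v z) - int (dist V E u z) = (if z \<in> branch V E u v then 1 else -1)"
    if "z \<in> V" for z
    using dist_edge_le[OF assms that] dist_edge_le[OF edge_sym[OF assms] that]
      dist_adjacent_neq[OF assms that] dist_commute[OF that \<open>u \<in> V\<close>] dist_commute[OF that \<open>v \<in> V\<close>] that
    unfolding branch_def by auto
  have "int (status V E v) - int (status V E u) = (\<Sum>z\<in>V. int (dist V E v z) - int (dist V E u z))"
    unfolding status_def by (simp add: sum_subtractf)
  also have "\<dots> = (\<Sum>z\<in>V. if z \<in> branch V E u v then 1 else -1)"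
    using step by (rule sum.cong[OF refl])
  also have "\<dots> = (\<Sum>z\<in>branch V E u v. if z \<in> branch V E u v then 1 else -1)
      + (\<Sum>z\<in>branch V E v u. if z \<in> branch V E u v then 1 else -1)"
    using sum.union_disjoint[OF finite_branch finite_branch branch_disjoint[of u v]] branch_Un[OF assms]
    by metis
  also have "\<dots> = (\<Sum>z\<in>branch V E u v. 1) + (\<Sum>z\<in>branch V E v u. -1)"
    using branch_disjoint[of u v] by (intro arg_cong2[where f = "(+)"] sum.cong) auto
  finally show ?thesis
    using card_branches_edge[OF assms] by simp
qed

lemma self_in_branch: "E y x \<Longrightarrow> y \<in> branch V E y x"
  unfolding branch_def using dist_self dist_edge edge_in_V by simp

lemma not_in_branch: "E z y \<Longrightarrow> y \<notin> branch V E z y"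
  unfolding branch_def using edge_in_V dist_self by auto

lemma branch_subset:
  assumes "E y x" "E y z" "z \<noteq> x" shows "branch V E z y \<subseteq> branch V E y x"
proof
  fix t assume "t \<in> branch V E z y"
  then have "t \<in> V" "dist V E t z < dist V E t y"
    unfolding branch_def by auto
  then show "t \<in> branch V E y x"
    using unique_closer_neighbour[OF edge_sym[OF assms(1)] assms(2)] assms(3)
      dist_adjacent_neq[OF edge_sym[OF assms(1)]]
    unfolding branch_def by (auto simp: nat_neq_iff)
qed

lemma branches_disjoint:
  assumes "E y z1" "E y z2" "z1 \<noteq> z2" shows "branch V E z1 y \<inter> branch V E z2 y = {}"
  using unique_closer_neighbour[OF edge_sym[OF assms(1)] assms(2)] assms(3)
  unfolding branch_def by auto

lemma V_eq_branches:
  assumes "y \<in> V" shows "V = insert y (\<Union>z \<in> neighbours E y. branch V E z y)"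
proof (intro equalityI subsetI)
  fix t assume "t \<in> V"
  show "t \<in> insert y (\<Union>z \<in> neighbours E y. branch V E z y)"
  proof (cases "t = y")
    case False
    then obtain k where k: "dist V E t y = Suc k"
      using dist_eq_0_iff[OF \<open>t \<in> V\<close> assms] not0_implies_Suc by blast
    then obtain u where "E u y" "dist V E t u = k"
      using dist_predecessor[OF \<open>t \<in> V\<close> assms] by metis
    then show ?thesis
      using k \<open>t \<in> V\<close> edge_sym unfolding branch_def by auto
  qed simp
qed (use assms in \<open>auto simp: branch_def\<close>)

lemma branch_eq:
  assumes "E y x" shows "branch V E y x = insert y (\<Union>z \<in> neighbours E y - {x}. branch V E z y)"
proof (intro equalityI subsetI)
  fix t assume t: "t \<in> branch V E y x"
  then have "t \<in> V" "t \<notin> branch V E x y"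
    using branch_disjoint[of y x] unfolding branch_def by auto
  then show "t \<in> insert y (\<Union>z \<in> neighbours E y - {x}. branch V E z y)"
    using V_eq_branches[OF edge_in_V(1)[OF assms]] by blast
qed (use self_in_branch[OF assms] branch_subset[OF assms] in fastforce)

lemma card_insert_branches:
  assumes "A \<subseteq> neighbours E y"
  shows "card (insert y (\<Union>z \<in> A. branch V E z y)) = Suc (\<Sum>z \<in> A. card (branch V E z y))"
proof -
  have "finite A"
    using finite_subset[OF assms finite_neighbours] .
  have "card (\<Union>z \<in> A. branch V E z y) = (\<Sum>z \<in> A. card (branch V E z y))"
    using assms branches_disjoint[of y]
    by (intro card_UN_disjoint[OF \<open>finite A\<close>]) (auto simp: finite_branch subset_iff)
  moreover have "y \<notin> (\<Union>z \<in> A. branch V E z y)"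
    using assms not_in_branch edge_sym by (fastforce simp: subset_iff)
  ultimately show ?thesis
    using \<open>finite A\<close> finite_branch by simp
qed

lemma card_V_branches:
  "y \<in> V \<Longrightarrow> card V = Suc (\<Sum>z \<in> neighbours E y. card (branch V E z y))"
  using card_insert_branches[of "neighbours E y" y] V_eq_branches by simp

lemma card_branch:
  "E y x \<Longrightarrow> card (branch V E y x) = Suc (\<Sum>z \<in> neighbours E y - {x}. card (branch V E z y))"
  using card_insert_branches[of "neighbours E y - {x}" y] branch_eq by simp

text \<open>Branches shrink strictly along a path.\<close>

lemma status_convex:
  assumes "E x y" "E y z" "x \<noteq> z"
  shows "int (status V E y) - int (status V E x) < int (status V E z) - int (status V E y)"
proof -
  have "branch V E z y \<subset> branch V E y x"
    using branch_subset[OF edge_sym[OF assms(1)] assms(2)] assms(3)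
      self_in_branch[OF edge_sym[OF assms(1)]] not_in_branch[OF edge_sym[OF assms(2)]] by blast
  then have "card (branch V E z y) < card (branch V E y x)"
    by (rule psubset_card_mono[OF finite_branch])
  then show ?thesis
    using status_edge_diff[OF assms(1)] status_edge_diff[OF assms(2)] by linarith
qed

lemma card_branch_star:
  assumes "E z v" "\<forall>w \<in> neighbours E v - {z}. neighbours E w = {v}"
  shows "card (branch V E v z) = Suc (card (neighbours E v - {z}))"
proof -
  have "card (branch V E w v) = 1" if w: "w \<in> neighbours E v - {z}" for w
  proof -
    have "neighbours E w = {v}" using assms(2) w by blast
    moreover have "E w v" using w edge_sym by simp
    ultimately show ?thesis using card_branch[of w v] by simp
  qed
  then have "(\<Sum>w \<in> neighbours E v - {z}. card (branch V E w v)) = card (neighbours E v - {z})"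
    by simp
  then show ?thesis
    using card_branch[OF edge_sym[OF assms(1)]] by simp
qed

lemma status_star:
  assumes "E z v" "\<forall>w \<in> neighbours E v - {z}. neighbours E w = {v}"
  shows "int (status V E v) = int (status V E z) + int (card V) - 2 * int (Suc (card (neighbours E v - {z})))"
  using status_edge_diff[OF assms(1)] card_branch_star[OF assms] by simp

lemma status_leaf:
  assumes "neighbours E w = {v}"
  shows "int (status V E w) = int (status V E v) + int (card V) - 2"
proof -
  have "E v w"
    using assms edge_sym by (metis mem_neighbours singletonI)
  then show ?thesis
    using status_star[of v w] assms by simp
qed

end

section \<open>Trees of the family and their statuses\<close>

lemma (in tree_graph) centred_cover:
  assumes "c \<in> V" "c \<noteq> c' \<Longrightarrow> E c c'"
    and pendant_leaf: "\<And>z v w. z \<in> {c, c'} \<Longrightarrow> v \<in> neighbours E z - {c, c'} \<Longrightarrow>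
      w \<in> neighbours E v - {z} \<Longrightarrow> neighbours E w = {v}"
    and "x \<in> V"
  shows "x \<in> {c, c'} \<or> (\<exists>z \<in> {c, c'}. x \<in> neighbours E z - {c, c'})
    \<or> (\<exists>z \<in> {c, c'}. \<exists>v \<in> neighbours E z - {c, c'}. x \<in> neighbours E v - {z})"
    (is "?covered x")
proof (rule connected_induct[OF assms(1), where P = "?covered"])
  fix x y assume "?covered x" "E x y"
  then show "?covered y"
  proof (elim disjE bexE)
    fix z v assume "z \<in> {c, c'}" "v \<in> neighbours E z - {c, c'}" "x \<in> neighbours E v - {z}"
    then have "y = v"
      using pendant_leaf \<open>E x y\<close> by (metis mem_neighbours singletonD)
    then show ?thesis
      using \<open>z \<in> {c, c'}\<close> \<open>v \<in> neighbours E z - {c, c'}\<close> by blast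
  qed auto
qed (use assms(4) in simp_all)

text \<open>The centre is \<open>{c, c'}\<close>, a single vertex (\<open>c = c'\<close>) for a star and an edge for a double
  star. The neighbours of a centre outside \<open>{c, c'}\<close> are the middle vertices, i.e. the leaves of
  the star or double star, and the further neighbours of a middle vertex are its pendant vertices.\<close>

locale centred_tree = tree_graph +
  fixes c c' :: 'a and b :: nat
  assumes centre_in_V: "c \<in> V"
    and centres_adjacent: "c \<noteq> c' \<Longrightarrow> E c c'"
    and pendant_leaf: "z \<in> {c, c'} \<Longrightarrow> v \<in> neighbours E z - {c, c'} \<Longrightarrow>
      w \<in> neighbours E v - {z} \<Longrightarrow> neighbours E w = {v}"
    and card_pendants: "z \<in> {c, c'} \<Longrightarrow> v \<in> neighbours E z - {c, c'} \<Longrightarrow>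
      card (neighbours E v - {z}) = b"
begin

lemma covers:
  assumes "x \<in> V"
  shows "x \<in> {c, c'} \<or> (\<exists>z \<in> {c, c'}. x \<in> neighbours E z - {c, c'})
    \<or> (\<exists>z \<in> {c, c'}. \<exists>v \<in> neighbours E z - {c, c'}. x \<in> neighbours E v - {z})"
  by (rule centred_cover[OF centre_in_V _ _ assms]) (rule centres_adjacent pendant_leaf; assumption)+

lemma card_branch_middle:
  assumes "z \<in> {c, c'}" "v \<in> neighbours E z - {c, c'}"
  shows "card (branch V E v z) = Suc b"
proof -
  have "E z v"
    using assms(2) by simp
  moreover have "\<forall>w \<in> neighbours E v - {z}. neighbours E w = {v}"
    by (intro ballI pendant_leaf[OF assms])
  ultimately have "card (branch V E v z) = Suc (card (neighbours E v - {z}))"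
    by (rule card_branch_star)
  then show ?thesis
    using card_pendants[OF assms] by simp
qed

lemma status_middle:
  assumes "z \<in> {c, c'}" "v \<in> neighbours E z - {c, c'}"
  shows "int (status V E v) = int (status V E z) + int (card V) - 2 * int (Suc b)"
  using status_edge_diff[of z v] card_branch_middle[OF assms] assms(2) by simp

lemma status_pendant:
  assumes "z \<in> {c, c'}" "v \<in> neighbours E z - {c, c'}" "w \<in> neighbours E v - {z}"
  shows "int (status V E w) = int (status V E v) + int (card V) - 2"
  using status_leaf[OF pendant_leaf[OF assms]] .

lemma card_branch_centre:
  assumes "c \<noteq> c'" "{z, z'} = {c, c'}"
  shows "card (branch V E z z') = Suc (card (neighbours E z - {c, c'}) * Suc b)"
proof -
  have "E z z'"
    using assms centres_adjacent edge_sym by (auto simp: doubleton_eq_iff)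
  moreover have "neighbours E z - {z'} = neighbours E z - {c, c'}"
    using assms edge_irrefl by (auto simp: doubleton_eq_iff)
  moreover have "z \<in> {c, c'}"
    using assms(2) by blast
  moreover have "(\<Sum>v \<in> neighbours E z - {c, c'}. card (branch V E v z))
      = card (neighbours E z - {c, c'}) * Suc b"
    using card_branch_middle[OF \<open>z \<in> {c, c'}\<close>] by simp
  ultimately show ?thesis
    using card_branch[of z z'] by simp
qed

lemma card_V_single_centre:
  assumes "c = c'" shows "card V = Suc (card (neighbours E c) * Suc b)"
proof -
  have "neighbours E c - {c, c'} = neighbours E c"
    using assms edge_irrefl by auto
  then have "(\<Sum>v \<in> neighbours E c. card (branch V E v c)) = card (neighbours E c) * Suc b"
    using card_branch_middle[of c] by simp
  then show ?thesis
    using card_V_branches[OF centre_in_V] by simp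
qed

end

locale family_shape = centred_tree +
  fixes l :: nat
  assumes pendants_pos: "1 \<le> b"
    and card_middles: "z \<in> {c, c'} \<Longrightarrow> card (neighbours E z - {c, c'}) = l"
    and middles_pos: "1 \<le> l"
    and star_middles: "c = c' \<Longrightarrow> 2 \<le> l"
begin

lemma card_V: "card V = card {c, c'} * Suc (l * Suc b)"
proof (cases "c = c'")
  case True
  moreover have "neighbours E c - {c, c'} = neighbours E c"
    using True edge_irrefl by auto
  ultimately have "card (neighbours E c) = l"
    using card_middles[of c] by simp
  then show ?thesis
    using card_V_single_centre[OF True] True by simp
next
  case False
  have "card (branch V E c c') = Suc (l * Suc b)" "card (branch V E c' c) = Suc (l * Suc b)"
    using card_branch_centre[OF False, of c c'] card_branch_centre[OF False, of c' c] card_middles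
    by (simp_all add: insert_commute)
  then show ?thesis
    using card_branches_edge[OF centres_adjacent[OF False]] False by simp
qed

lemma card_V_gt: "2 + 2 * b < card V"
proof (cases "c = c'")
  case True
  then have "2 * Suc b \<le> l * Suc b"
    using star_middles by (intro mult_le_mono1) simp
  then show ?thesis
    using card_V True by simp
next
  case False
  have "Suc b \<le> l * Suc b"
    using mult_le_mono1[OF middles_pos, of "Suc b"] by simp
  then show ?thesis
    using card_V False by simp
qed

lemma status_centres: "status V E c' = status V E c"
proof (cases "c = c'")
  case False
  have "card (branch V E c' c) = Suc (l * Suc b)"
    using card_branch_centre[OF False, of c' c] card_middles by (simp add: insert_commute)
  then show ?thesis
    using status_edge_diff[OF centres_adjacent[OF False]] card_V False by simp
qed simp

lemma num_status_3: "num_status V E = 3"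
proof -
  define S where "S = int (status V E c)"
  define n where "n = int (card V)"
  have middle: "int (status V E v) = S + n - 2 - 2 * int b"
    if "z \<in> {c, c'}" "v \<in> neighbours E z - {c, c'}" for z v
    using status_middle[OF that] status_centres that unfolding S_def n_def by auto
  have pendant: "int (status V E w) = S + 2 * n - 4 - 2 * int b"
    if "z \<in> {c, c'}" "v \<in> neighbours E z - {c, c'}" "w \<in> neighbours E v - {z}" for z v w
    using status_pendant[OF that] middle[OF that(1,2)] unfolding n_def by simp
  have image: "(\<lambda>x. int (status V E x)) ` V = {S, S + n - 2 - 2 * int b, S + 2 * n - 4 - 2 * int b}"
  proof (intro equalityI subsetI)
    fix y assume "y \<in> (\<lambda>x. int (status V E x)) ` V"
    then obtain x where "x \<in> V" and y: "y = int (status V E x)"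
      by blast
    from covers[OF \<open>x \<in> V\<close>] show "y \<in> {S, S + n - 2 - 2 * int b, S + 2 * n - 4 - 2 * int b}"
    proof (elim disjE bexE)
      assume "x \<in> {c, c'}"
      then show ?thesis
        using y status_centres unfolding S_def by auto
    qed (use y middle pendant in auto)
  next
    have "neighbours E c - {c, c'} \<noteq> {}"
      using card_middles[of c] middles_pos by (metis card.empty insertI1 not_one_le_zero)
    then obtain v where v: "v \<in> neighbours E c - {c, c'}"
      by blast
    then have "neighbours E v - {c} \<noteq> {}"
      using card_pendants[of c v] v pendants_pos by (metis card.empty insertI1 not_one_le_zero)
    then obtain w where w: "w \<in> neighbours E v - {c}"
      by blast
    have "v \<in> V" "w \<in> V"
      using v w edge_in_V by auto
    have "{S, S + n - 2 - 2 * int b, S + 2 * n - 4 - 2 * int b}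
        = (\<lambda>x. int (status V E x)) ` {c, v, w}"
      using middle[of c v] pendant[of c v w] v w unfolding S_def by auto
    also have "\<dots> \<subseteq> (\<lambda>x. int (status V E x)) ` V"
      using \<open>v \<in> V\<close> \<open>w \<in> V\<close> centre_in_V by auto
    finally show "y \<in> (\<lambda>x. int (status V E x)) ` V"
      if "y \<in> {S, S + n - 2 - 2 * int b, S + 2 * n - 4 - 2 * int b}" for y
      using that by blast
  qed
  have "card ((\<lambda>x. int (status V E x)) ` V) = 3"
    unfolding image using card_V_gt unfolding n_def by simp
  moreover have "(\<lambda>x. int (status V E x)) ` V = int ` status V E ` V"
    by (simp add: image_image)
  ultimately show ?thesis
    unfolding num_status_def by (simp add: card_image)
qed

end

context tree_graph
begin

context
  fixes c c' :: 'a
  assumes c_in_V: "c \<in> V"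
    and c_c'_adjacent: "c \<noteq> c' \<Longrightarrow> E c c'"
    and status_min: "\<And>x. x \<in> V \<Longrightarrow> status V E c \<le> status V E x"
    and status_c': "status V E c' = status V E c"
    and strict_min: "\<And>v. c = c' \<Longrightarrow> E c v \<Longrightarrow> status V E v \<noteq> status V E c"
    and three_statuses: "num_status V E = 3"
begin

lemma middle_status_gt:
  assumes "z \<in> {c, c'}" "v \<in> neighbours E z - {c, c'}"
  shows "status V E c < status V E v"
proof (cases "c = c'")
  case True
  then have "E c v"
    using assms by auto
  then show ?thesis
    using strict_min[OF True] status_min[OF edge_in_V(2)] by (metis le_neq_implies_less)
next
  case False
  define z' where "z' = (if z = c then c' else c)"
  have "E c c'" "E c' c"
    using c_c'_adjacent[OF False] edge_sym by blast+
  then have "E z' z" "z' \<noteq> v"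
    using assms unfolding z'_def by auto
  moreover have "status V E z' = status V E c" "status V E z = status V E c"
    using assms status_c' unfolding z'_def by auto
  ultimately show ?thesis
    using status_convex[OF \<open>E z' z\<close>, of v] assms(2) by simp
qed

text \<open>By convexity a non-leaf pendant vertex would start a path with four distinct statuses.\<close>

lemma pendant_is_leaf:
  assumes "z \<in> {c, c'}" "v \<in> neighbours E z - {c, c'}" "w \<in> neighbours E v - {z}"
  shows "neighbours E w = {v}"
proof -
  have only_v: "u = v" if "E w u" for u
  proof (rule ccontr)
    assume "u \<noteq> v"
    have "E z v" "E v w" "z \<noteq> w"
      using assms by auto
    have "v \<in> V" "w \<in> V" "u \<in> V"
      using edge_in_V \<open>E v w\<close> \<open>E w u\<close> by blast+
    have "status V E z = status V E c"
      using assms(1) status_c' by auto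
    then have increasing: "status V E c < status V E v" "status V E v < status V E w"
      "status V E w < status V E u"
      using middle_status_gt[OF assms(1,2)] status_convex[OF \<open>E z v\<close> \<open>E v w\<close> \<open>z \<noteq> w\<close>]
        status_convex[OF \<open>E v w\<close> \<open>E w u\<close> \<open>u \<noteq> v\<close>[symmetric]] by linarith+
    have "{status V E c, status V E v, status V E w, status V E u} \<subseteq> status V E ` V"
      using c_in_V \<open>v \<in> V\<close> \<open>w \<in> V\<close> \<open>u \<in> V\<close> by blast
    then have "card {status V E c, status V E v, status V E w, status V E u} \<le> num_status V E"
      unfolding num_status_def by (rule card_mono[OF finite_imageI[OF finite_V]])
    then show False
      using increasing three_statuses by simp
  qed
  moreover have "E w v"
    using assms(3) edge_sym[of v w] by simp
  ultimately show ?thesis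
    unfolding neighbours_def by blast
qed

lemma status_middle_min:
  assumes "z \<in> {c, c'}" "v \<in> neighbours E z - {c, c'}"
  shows "int (status V E v)
    = int (status V E c) + int (card V) - 2 * int (Suc (card (neighbours E v - {z})))"
proof -
  have "E z v"
    using assms(2) by simp
  moreover have "\<forall>w \<in> neighbours E v - {z}. neighbours E w = {v}"
    by (intro ballI pendant_is_leaf[OF assms])
  ultimately have "int (status V E v)
    = int (status V E z) + int (card V) - 2 * int (Suc (card (neighbours E v - {z})))"
    by (rule status_star)
  then show ?thesis
    using assms(1) status_c' by auto
qed

lemma pendant_exists: "\<exists>z \<in> {c, c'}. \<exists>v \<in> neighbours E z - {c, c'}. neighbours E v - {z} \<noteq> {}"
proof (rule ccontr)
  assume no_pendant: "\<not> ?thesis"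
  have "status V E x \<in> {status V E c, status V E c + card V - 2}" if "x \<in> V" for x
  proof -
    have "x \<in> {c, c'} \<or> (\<exists>z \<in> {c, c'}. x \<in> neighbours E z - {c, c'})
      \<or> (\<exists>z \<in> {c, c'}. \<exists>v \<in> neighbours E z - {c, c'}. x \<in> neighbours E v - {z})"
      by (rule centred_cover[OF c_in_V _ _ that]) (rule c_c'_adjacent pendant_is_leaf; assumption)+
    then consider "x \<in> {c, c'}" | z where "z \<in> {c, c'}" "x \<in> neighbours E z - {c, c'}"
      using no_pendant by blast
    then show ?thesis
    proof cases
      case 1
      then show ?thesis
        using status_c' by auto
    next
      case (2 z)
      then have "neighbours E x - {z} = {}"
        using no_pendant by blast
      then have "int (status V E x) = int (status V E c) + int (card V) - 2"
        using status_middle_min[OF 2] by (simp only: card.empty)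
      then have "status V E x = status V E c + card V - 2"
        using status_min[OF that] by arith
      then show ?thesis
        by simp
    qed
  qed
  then have "num_status V E \<le> card {status V E c, status V E c + card V - 2}"
    unfolding num_status_def by (intro card_mono) auto
  also have "\<dots> \<le> 2"
    by (simp add: card_insert_if)
  finally show False
    using three_statuses by simp
qed

text \<open>The three statuses are those of \<open>c\<close>, of a middle vertex and of a pendant vertex; a middle
  vertex with a different number of pendant vertices would produce a fourth one.\<close>

lemma uniform_pendants:
  obtains b where "1 \<le> b" "2 + 2 * b < card V"
    "\<And>z v. z \<in> {c, c'} \<Longrightarrow> v \<in> neighbours E z - {c, c'} \<Longrightarrow> card (neighbours E v - {z}) = b"
proof -
  obtain z0 v0 w0 where z0: "z0 \<in> {c, c'}" and v0: "v0 \<in> neighbours E z0 - {c, c'}"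
    and w0: "w0 \<in> neighbours E v0 - {z0}"
    using pendant_exists by blast
  define b where "b = card (neighbours E v0 - {z0})"
  have "neighbours E v0 - {z0} \<noteq> {}"
    using w0 by blast
  then have "1 \<le> b"
    unfolding b_def using finite_neighbours[of v0] by (simp add: Suc_le_eq card_gt_0_iff)
  have status_v0: "int (status V E v0) = int (status V E c) + int (card V) - 2 * int (Suc b)"
    using status_middle_min[OF z0 v0] unfolding b_def .
  have status_w0: "int (status V E w0) = int (status V E v0) + int (card V) - 2"
    using status_leaf[OF pendant_is_leaf[OF z0 v0 w0]] .
  have card_V_gt: "2 + 2 * b < card V"
    using status_v0 middle_status_gt[OF z0 v0] by simp
  have "v0 \<in> V" "w0 \<in> V"
    using v0 w0 by (auto dest: edge_in_V)
  have "status V E c < status V E v0" "status V E v0 < status V E w0"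
    using status_v0 status_w0 card_V_gt middle_status_gt[OF z0 v0] by simp_all
  then have "card {status V E c, status V E v0, status V E w0} = card (status V E ` V)"
    using three_statuses unfolding num_status_def by simp
  then have image: "status V E ` V = {status V E c, status V E v0, status V E w0}"
    using card_subset_eq[OF finite_imageI[OF finite_V]] c_in_V \<open>v0 \<in> V\<close> \<open>w0 \<in> V\<close>
    by (metis empty_subsetI image_eqI insert_subset)
  have "card (neighbours E v - {z}) = b"
    if z: "z \<in> {c, c'}" and v: "v \<in> neighbours E z - {c, c'}" for z v
  proof -
    have "status V E v \<in> {status V E c, status V E v0, status V E w0}"
      using image v by (auto dest: edge_in_V)
    moreover have "status V E v \<noteq> status V E c"
      using middle_status_gt[OF z v] by simp
    moreover have "status V E v \<noteq> status V E w0"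
      using status_middle_min[OF z v] status_v0 status_w0 card_V_gt by simp
    ultimately have "status V E v = status V E v0"
      by blast
    then show ?thesis
      using status_middle_min[OF z v] status_v0 by simp
  qed
  then show ?thesis
    using that \<open>1 \<le> b\<close> card_V_gt by blast
qed

lemma family_shape_at_min_centre: "\<exists>b l. family_shape V E c c' b l"
proof -
  obtain b where b: "1 \<le> b" "2 + 2 * b < card V"
    and card_pendants: "\<And>z v. z \<in> {c, c'} \<Longrightarrow> v \<in> neighbours E z - {c, c'} \<Longrightarrow>
      card (neighbours E v - {z}) = b"
    using uniform_pendants by blast
  have "centred_tree V E c c' b"
    using c_in_V c_c'_adjacent pendant_is_leaf card_pendants by unfold_locales
  then interpret ct: centred_tree V E c c' b .
  obtain z0 v0 where z0: "z0 \<in> {c, c'}" and v0: "v0 \<in> neighbours E z0 - {c, c'}"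
    using pendant_exists by blast
  define l where "l = card (neighbours E c - {c, c'})"
  have card_middles: "card (neighbours E z - {c, c'}) = l" if "z \<in> {c, c'}" for z
  proof (cases "c = c'")
    case False
    have "int (status V E c') - int (status V E c) = 0"
      using status_c' by simp
    then have "card (branch V E c c') = card (branch V E c' c)"
      using status_edge_diff[OF c_c'_adjacent[OF False]] card_branches_edge[OF c_c'_adjacent[OF False]]
      by linarith
    moreover have "card (branch V E c c') = Suc (l * Suc b)"
      using ct.card_branch_centre[OF False, of c c'] unfolding l_def by simp
    moreover have "card (branch V E c' c) = Suc (card (neighbours E c' - {c, c'}) * Suc b)"
      using ct.card_branch_centre[OF False, of c' c] by (simp add: insert_commute)
    ultimately have "card (neighbours E c' - {c, c'}) = l"
      by (metis Suc_inject Zero_not_Suc mult_cancel2)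
    then show ?thesis
      using that unfolding l_def by auto
  qed (use that l_def in auto)
  have "0 < card (neighbours E z0 - {c, c'})"
    using v0 finite_neighbours[of z0] by (auto simp: card_gt_0_iff)
  then have "1 \<le> l"
    using card_middles[OF z0] by simp
  moreover have "2 \<le> l" if "c = c'"
  proof (rule ccontr)
    assume "\<not> 2 \<le> l"
    moreover have "neighbours E c - {c, c'} = neighbours E c"
      using that edge_irrefl by auto
    ultimately have "card (neighbours E c) \<le> 1"
      using l_def by simp
    then show False
      using ct.card_V_single_centre[OF that] b by (auto simp: le_Suc_eq)
  qed
  ultimately have "family_shape V E c c' b l"
    using b card_middles by unfold_locales
  then show ?thesis
    by blast
qed

end

lemma num_status_3_iff_family_shape:
  "num_status V E = 3 \<longleftrightarrow> (\<exists>c c' b l. family_shape V E c c' b l)"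
proof
  assume three: "num_status V E = 3"
  have "V \<noteq> {}"
    using connected unfolding connected_graph_def by blast
  then obtain c where "c \<in> V" and c_min: "status V E c = Min (status V E ` V)"
    using Min_in[OF finite_imageI[OF finite_V]] by (metis image_iff image_is_empty)
  then have status_min: "\<And>x. x \<in> V \<Longrightarrow> status V E c \<le> status V E x"
    using finite_V by simp
  show "\<exists>c c' b l. family_shape V E c c' b l"
  proof (cases "\<exists>c'. E c c' \<and> status V E c' = status V E c")
    case True
    then obtain c' where "E c c'" "status V E c' = status V E c"
      by blast
    then show ?thesis
      using family_shape_at_min_centre[OF \<open>c \<in> V\<close> _ status_min _ _ three] edge_irrefl by blast
  next
    case False
    then show ?thesis
      using family_shape_at_min_centre[OF \<open>c \<in> V\<close> _ status_min refl _ three] by blast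
  qed
next
  assume "\<exists>c c' b l. family_shape V E c c' b l"
  then obtain c c' b l where "family_shape V E c c' b l"
    by blast
  then show "num_status V E = 3"
    by (rule family_shape.num_status_3)
qed

end

section \<open>The model trees\<close>

lemma mem_model_verts [simp]:
  "Ctr s \<in> model_verts C l b \<longleftrightarrow> s < C"
  "Lf s i \<in> model_verts C l b \<longleftrightarrow> s < C \<and> i < l"
  "Pd s i j \<in> model_verts C l b \<longleftrightarrow> s < C \<and> i < l \<and> j < b"
  by (auto simp: model_verts_def)

lemma model_adj0_iff:
  "model_adj0 x y \<longleftrightarrow> (\<exists>s t. x = Ctr s \<and> y = Ctr t \<and> s < t) \<or> (\<exists>s i. x = Ctr s \<and> y = Lf s i)
    \<or> (\<exists>s i j. x = Lf s i \<and> y = Pd s i j)"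
  by (cases x; cases y) auto

lemma model_neighbours_Ctr:
  "s < C \<Longrightarrow> neighbours (model_adj C l b) (Ctr s) = {Ctr t | t. t < C \<and> t \<noteq> s} \<union> Lf s ` {..<l}"
  unfolding neighbours_def model_adj_def model_adj0_iff by (auto simp: nat_neq_iff)

lemma model_neighbours_Lf:
  "s < C \<Longrightarrow> i < l \<Longrightarrow> neighbours (model_adj C l b) (Lf s i) = insert (Ctr s) (Pd s i ` {..<b})"
  unfolding neighbours_def model_adj_def model_adj0_iff by auto

lemma model_neighbours_Pd:
  "s < C \<Longrightarrow> i < l \<Longrightarrow> j < b \<Longrightarrow> neighbours (model_adj C l b) (Pd s i j) = {Lf s i}"
  unfolding neighbours_def model_adj_def model_adj0_iff by auto

lemma model_neighbours_subset: "neighbours (model_adj C l b) p \<subseteq> model_verts C l b"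
  by (auto simp: model_adj_def)

lemma model_verts_eq:
  "model_verts C l b = Ctr ` {..<C} \<union> (\<lambda>(s, i). Lf s i) ` ({..<C} \<times> {..<l})
    \<union> (\<lambda>(s, i, j). Pd s i j) ` ({..<C} \<times> {..<l} \<times> {..<b})"
proof -
  have "{Ctr s | s. s < C} = Ctr ` {..<C}"
    "{Lf s i | s i. s < C \<and> i < l} = (\<lambda>(s, i). Lf s i) ` ({..<C} \<times> {..<l})"
    "{Pd s i j | s i j. s < C \<and> i < l \<and> j < b} = (\<lambda>(s, i, j). Pd s i j) ` ({..<C} \<times> {..<l} \<times> {..<b})"
    by (auto simp: image_iff)
  then show ?thesis
    unfolding model_verts_def by simp
qed

lemma finite_model_verts: "finite (model_verts C l b)"
  unfolding model_verts_eq by simp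

lemma card_model_verts: "card (model_verts C l b) = C * Suc (l * Suc b)"
proof -
  let ?Ctrs = "Ctr ` {..<C}"
  let ?Lfs = "(\<lambda>(s, i). Lf s i) ` ({..<C} \<times> {..<l})"
  let ?Pds = "(\<lambda>(s, i, j). Pd s i j) ` ({..<C} \<times> {..<l} \<times> {..<b})"
  have "card ?Ctrs = C" "card ?Lfs = C * l" "card ?Pds = C * (l * b)"
    by (simp_all add: card_image inj_on_def card_cartesian_product)
  moreover have "?Ctrs \<inter> ?Lfs = {}" "(?Ctrs \<union> ?Lfs) \<inter> ?Pds = {}"
    by auto
  ultimately show ?thesis
    unfolding model_verts_eq by (simp add: card_Un_disjoint algebra_simps)
qed

lemma bij_betw_inv_into_rel:
  assumes "bij_betw f A B" "\<And>x y. x \<in> A \<Longrightarrow> y \<in> A \<Longrightarrow> R x y \<longleftrightarrow> S (f x) (f y)"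
    and "p \<in> B" "q \<in> B"
  shows "S p q \<longleftrightarrow> R (inv_into A f p) (inv_into A f q)"
proof -
  have "p \<in> f ` A" "q \<in> f ` A"
    using assms(1,3,4) by (auto simp: bij_betw_def)
  then show ?thesis
    using assms(2)[OF inv_into_into[OF \<open>p \<in> f ` A\<close>] inv_into_into[OF \<open>q \<in> f ` A\<close>]]
    by (simp add: f_inv_into_f)
qed

context tree_graph
begin

context
  fixes C l b :: nat and h :: "mvtx \<Rightarrow> 'a"
  assumes bij_h: "bij_betw h (model_verts C l b) V"
    and adj_h: "\<And>p q. p \<in> model_verts C l b \<Longrightarrow> q \<in> model_verts C l b \<Longrightarrow>
      E (h p) (h q) \<longleftrightarrow> model_adj C l b p q"
begin

lemma neighbours_embedded:
  assumes "p \<in> model_verts C l b"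
  shows "neighbours E (h p) = h ` neighbours (model_adj C l b) p"
proof (intro equalityI subsetI)
  fix y assume "y \<in> neighbours E (h p)"
  then have "E (h p) y" "y \<in> V"
    using edge_in_V by auto
  then obtain q where "q \<in> model_verts C l b" "y = h q"
    using bij_h by (auto simp: bij_betw_def)
  then show "y \<in> h ` neighbours (model_adj C l b) p"
    using adj_h[OF assms] \<open>E (h p) y\<close> by auto
next
  fix y assume "y \<in> h ` neighbours (model_adj C l b) p"
  then obtain q where "model_adj C l b p q" "y = h q"
    by auto
  then show "y \<in> neighbours E (h p)"
    using adj_h[OF assms] by (simp add: model_adj_def)
qed

lemma embedded_diff:
  assumes "A \<subseteq> model_verts C l b" "B \<subseteq> model_verts C l b"
  shows "h ` A - h ` B = h ` (A - B)"
proof -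
  have "inj_on h (model_verts C l b)"
    using bij_h by (simp add: bij_betw_def)
  then show ?thesis
    using assms by (metis Diff_subset inj_on_image_set_diff order_trans)
qed

lemma card_embedded: "A \<subseteq> model_verts C l b \<Longrightarrow> card (h ` A) = card A"
  using bij_h by (auto simp: bij_betw_def intro: card_image inj_on_subset)

lemma family_shape_embedded:
  assumes b: "1 \<le> b" and C: "(C = 1 \<and> 2 \<le> l) \<or> (C = 2 \<and> 1 \<le> l)"
  shows "family_shape V E (h (Ctr 0)) (h (Ctr (C - 1))) b l"
proof -
  define c c' where "c = h (Ctr 0)" and "c' = h (Ctr (C - 1))"
  have ctrs: "Ctr ` {..<C} \<subseteq> model_verts C l b"
    by auto
  have "{..<C} = {0, C - 1}"
    using C by auto
  then have centres: "{c, c'} = h ` Ctr ` {..<C}"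
    unfolding c_def c'_def by simp
  have middles: "neighbours E (h (Ctr s)) - {c, c'} = h ` Lf s ` {..<l}" if "s < C" for s
  proof -
    have "neighbours E (h (Ctr s)) - {c, c'}
        = h ` (neighbours (model_adj C l b) (Ctr s) - Ctr ` {..<C})"
      unfolding centres using neighbours_embedded[of "Ctr s"] that
        embedded_diff[OF model_neighbours_subset ctrs] by simp
    also have "neighbours (model_adj C l b) (Ctr s) - Ctr ` {..<C} = Lf s ` {..<l}"
      using model_neighbours_Ctr[OF that] by auto
    finally show ?thesis .
  qed
  have pendants: "neighbours E (h (Lf s i)) - {h (Ctr s)} = h ` Pd s i ` {..<b}"
    if "s < C" "i < l" for s i
  proof -
    have "neighbours E (h (Lf s i)) - {h (Ctr s)}
        = h ` (neighbours (model_adj C l b) (Lf s i) - {Ctr s})"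
      using neighbours_embedded[of "Lf s i"] that
        embedded_diff[OF model_neighbours_subset, of "{Ctr s}"] by simp
    also have "neighbours (model_adj C l b) (Lf s i) - {Ctr s} = Pd s i ` {..<b}"
      using model_neighbours_Lf[OF that] by auto
    finally show ?thesis .
  qed
  have centre_cases: "\<exists>s < C. z = h (Ctr s)" if "z \<in> {c, c'}" for z
    using that centres by auto
  have "c = c' \<longleftrightarrow> C = 1"
    using C bij_h unfolding c_def c'_def bij_betw_def inj_on_def by force
  show ?thesis
    unfolding c_def[symmetric] c'_def[symmetric]
  proof unfold_locales
    show "c \<in> V"
      using bij_h C unfolding c_def bij_betw_def by auto
    show "E c c'" if "c \<noteq> c'"
      using that \<open>c = c' \<longleftrightarrow> C = 1\<close> C adj_h[of "Ctr 0" "Ctr 1"]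
      unfolding c_def c'_def by (auto simp: model_adj_def)
    fix z v w
    assume z: "z \<in> {c, c'}" and v: "v \<in> neighbours E z - {c, c'}"
    then obtain s i where "s < C" "i < l" "z = h (Ctr s)" "v = h (Lf s i)"
      using centre_cases middles by blast
    moreover have "Pd s i ` {..<b} \<subseteq> model_verts C l b"
      using \<open>s < C\<close> \<open>i < l\<close> by auto
    ultimately show "card (neighbours E v - {z}) = b"
      using pendants card_embedded[of "Pd s i ` {..<b}"] by (simp add: card_image inj_on_def)
    assume "w \<in> neighbours E v - {z}"
    then obtain j where "j < b" "w = h (Pd s i j)"
      using pendants \<open>s < C\<close> \<open>i < l\<close> \<open>z = h (Ctr s)\<close> \<open>v = h (Lf s i)\<close> by auto
    then show "neighbours E w = {v}"
      using neighbours_embedded[of "Pd s i j"] model_neighbours_Pd \<open>s < C\<close> \<open>i < l\<close> \<open>v = h (Lf s i)\<close>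
      by simp
  next
    fix z assume "z \<in> {c, c'}"
    then obtain s where "s < C" "z = h (Ctr s)"
      using centre_cases by blast
    moreover have "Lf s ` {..<l} \<subseteq> model_verts C l b"
      using \<open>s < C\<close> by auto
    ultimately show "card (neighbours E z - {c, c'}) = l"
      using middles card_embedded[of "Lf s ` {..<l}"] by (simp add: card_image inj_on_def)
  qed (use b C \<open>c = c' \<longleftrightarrow> C = 1\<close> in auto)
qed

end

end

context family_shape
begin

definition centre_at :: "nat \<Rightarrow> 'a" where
  "centre_at s = (if s = 0 then c else c')"

definition middle_enum :: "'a \<Rightarrow> nat \<Rightarrow> 'a" where
  "middle_enum z = (SOME g. bij_betw g {..<l} (neighbours E z - {c, c'}))"

definition pendant_enum :: "'a \<Rightarrow> 'a \<Rightarrow> nat \<Rightarrow> 'a" where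
  "pendant_enum z v = (SOME g. bij_betw g {..<b} (neighbours E v - {z}))"

primrec embed :: "mvtx \<Rightarrow> 'a" where
  "embed (Ctr s) = centre_at s"
| "embed (Lf s i) = middle_enum (centre_at s) i"
| "embed (Pd s i j) = pendant_enum (centre_at s) (middle_enum (centre_at s) i) j"

abbreviation model :: "mvtx set" where
  "model \<equiv> model_verts (card {c, c'}) l b"

lemma centre_at_in_centres: "centre_at s \<in> {c, c'}"
  by (simp add: centre_at_def)

lemma centres_eq: "{c, c'} = centre_at ` {..<card {c, c'}}"
proof -
  have "centre_at 0 = c" "centre_at 1 = c'"
    by (simp_all add: centre_at_def)
  show ?thesis
  proof (cases "c = c'")
    case True
    then have "{..<card {c, c'}} = {0}"
      by (simp add: lessThan_Suc)
    then have "centre_at ` {..<card {c, c'}} = {c}"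
      using \<open>centre_at 0 = c\<close> by simp
    then show ?thesis
      using True by simp
  next
    case False
    then have "{..<card {c, c'}} = {0, 1}"
      by auto
    then show ?thesis
      using \<open>centre_at 0 = c\<close> \<open>centre_at 1 = c'\<close> by simp
  qed
qed

lemma ex_bij_lessThan: "finite A \<Longrightarrow> \<exists>g. bij_betw g {..<card A} A"
  using ex_bij_betw_nat_finite by (metis atLeast0LessThan)

lemma bij_middle_enum:
  assumes "z \<in> {c, c'}" shows "bij_betw (middle_enum z) {..<l} (neighbours E z - {c, c'})"
  unfolding middle_enum_def using ex_bij_lessThan[of "neighbours E z - {c, c'}"] card_middles[OF assms]
    finite_neighbours by (metis finite_Diff someI_ex)

lemma bij_pendant_enum:
  assumes "z \<in> {c, c'}" "v \<in> neighbours E z - {c, c'}"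
  shows "bij_betw (pendant_enum z v) {..<b} (neighbours E v - {z})"
  unfolding pendant_enum_def using ex_bij_lessThan[of "neighbours E v - {z}"] card_pendants[OF assms]
    finite_neighbours by (metis finite_Diff someI_ex)

lemma embed_Lf_in: "i < l \<Longrightarrow> embed (Lf s i) \<in> neighbours E (centre_at s) - {c, c'}"
  using bij_betw_apply[OF bij_middle_enum[OF centre_at_in_centres]] by simp

lemma embed_Pd_in:
  "i < l \<Longrightarrow> j < b \<Longrightarrow> embed (Pd s i j) \<in> neighbours E (embed (Lf s i)) - {centre_at s}"
  using bij_betw_apply[OF bij_pendant_enum[OF centre_at_in_centres embed_Lf_in]] by simp

lemma centre_cases: "z \<in> {c, c'} \<Longrightarrow> \<exists>s < card {c, c'}. z = centre_at s"
  using centres_eq by blast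

lemma middle_cases:
  assumes "v \<in> neighbours E (centre_at s) - {c, c'}"
  shows "\<exists>i < l. v = embed (Lf s i)"
  using assms bij_betw_imp_surj_on[OF bij_middle_enum[OF centre_at_in_centres, of s]] by auto

lemma pendant_cases:
  assumes "i < l" "w \<in> neighbours E (embed (Lf s i)) - {centre_at s}"
  shows "\<exists>j < b. w = embed (Pd s i j)"
proof -
  have "w \<in> pendant_enum (centre_at s) (embed (Lf s i)) ` {..<b}"
    using assms(2) bij_betw_imp_surj_on[OF bij_pendant_enum[OF centre_at_in_centres embed_Lf_in[OF assms(1)]]]
    by simp
  then show ?thesis
    by auto
qed

lemma embed_in_V:
  assumes "p \<in> model" shows "embed p \<in> V"
proof (cases p)
  case (Ctr s)
  have "c' \<in> V"
    using centre_in_V centres_adjacent edge_in_V by blast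
  then show ?thesis
    using Ctr centre_in_V centre_at_in_centres[of s] by auto
next
  case (Lf s i)
  then show ?thesis
    using assms embed_Lf_in[of i s] edge_in_V by auto
next
  case (Pd s i j)
  then show ?thesis
    using assms embed_Pd_in[of i j s] edge_in_V by auto
qed

lemma embed_image: "embed ` model = V"
proof (intro equalityI subsetI)
  fix x assume "x \<in> V"
  from covers[OF this] show "x \<in> embed ` model"
  proof (elim disjE bexE)
    assume "x \<in> {c, c'}"
    then obtain s where "s < card {c, c'}" "x = centre_at s"
      using centre_cases by blast
    then have "Ctr s \<in> model" "x = embed (Ctr s)"
      by simp_all
    then show ?thesis
      by blast
  next
    fix z assume "z \<in> {c, c'}" "x \<in> neighbours E z - {c, c'}"
    obtain s where "s < card {c, c'}" "z = centre_at s"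
      using centre_cases[OF \<open>z \<in> {c, c'}\<close>] by blast
    then obtain i where "i < l" "x = embed (Lf s i)"
      using middle_cases \<open>x \<in> neighbours E z - {c, c'}\<close> by blast
    then have "Lf s i \<in> model" "x = embed (Lf s i)"
      using \<open>s < card {c, c'}\<close> by simp_all
    then show ?thesis
      by blast
  next
    fix z v assume "z \<in> {c, c'}" "v \<in> neighbours E z - {c, c'}" "x \<in> neighbours E v - {z}"
    obtain s where "s < card {c, c'}" "z = centre_at s"
      using centre_cases[OF \<open>z \<in> {c, c'}\<close>] by blast
    then obtain i where "i < l" "v = embed (Lf s i)"
      using middle_cases \<open>v \<in> neighbours E z - {c, c'}\<close> by blast
    then obtain j where "j < b" "x = embed (Pd s i j)"
      using pendant_cases \<open>x \<in> neighbours E v - {z}\<close> \<open>z = centre_at s\<close> by blast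
    then have "Pd s i j \<in> model" "x = embed (Pd s i j)"
      using \<open>s < card {c, c'}\<close> \<open>i < l\<close> by simp_all
    then show ?thesis
      by blast
  qed
qed (use embed_in_V in blast)

text \<open>Injectivity comes for free from counting: both sides have
  \<open>card {c, c'} * (1 + l * (1 + b))\<close> elements.\<close>

lemma inj_embed: "inj_on embed model"
  using embed_image card_V card_model_verts finite_model_verts by (intro eq_card_imp_inj_on) simp_all

lemma model_adj0_embed:
  assumes "p \<in> model" "q \<in> model" "model_adj0 p q"
  shows "E (embed p) (embed q)"
  using assms(3)[unfolded model_adj0_iff]
proof (elim disjE exE conjE)
  fix s t assume "p = Ctr s" "q = Ctr t" "s < t"
  then have "c \<noteq> c'" "s = 0" "t = 1"
    using assms(2) by (auto simp: card_insert_if split: if_splits)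
  then show ?thesis
    using centres_adjacent \<open>p = Ctr s\<close> \<open>q = Ctr t\<close> by (simp add: centre_at_def)
next
  fix s i assume "p = Ctr s" "q = Lf s i"
  then show ?thesis
    using assms(2) embed_Lf_in by auto
next
  fix s i j assume "p = Lf s i" "q = Pd s i j"
  then show ?thesis
    using assms(2) embed_Pd_in by auto
qed

lemma neighbours_embed:
  assumes "p \<in> model"
  shows "neighbours E (embed p) \<subseteq> embed ` neighbours (model_adj (card {c, c'}) l b) p"
proof
  fix y assume y: "y \<in> neighbours E (embed p)"
  show "y \<in> embed ` neighbours (model_adj (card {c, c'}) l b) p"
  proof (cases p)
    case (Ctr s)
    then have "s < card {c, c'}"
      using assms by simp
    show ?thesis
    proof (cases "y \<in> {c, c'}")
      case True
      then obtain t where "t < card {c, c'}" "y = embed (Ctr t)"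
        using centre_cases by auto
      moreover have "t \<noteq> s"
        using y edge_irrefl Ctr calculation by auto
      ultimately show ?thesis
        using Ctr model_neighbours_Ctr[OF \<open>s < card {c, c'}\<close>] by blast
    next
      case False
      then have "y \<in> neighbours E (centre_at s) - {c, c'}"
        using y Ctr by simp
      then obtain i where "i < l" "y = embed (Lf s i)"
        using middle_cases by blast
      then show ?thesis
        using Ctr model_neighbours_Ctr[OF \<open>s < card {c, c'}\<close>] by blast
    qed
  next
    case (Lf s i)
    then have "s < card {c, c'}" "i < l"
      using assms by simp_all
    show ?thesis
    proof (cases "y = centre_at s")
      case True
      then show ?thesis
        using Lf model_neighbours_Lf[OF \<open>s < card {c, c'}\<close> \<open>i < l\<close>] by auto
    next
      case False
      then have "y \<in> neighbours E (embed (Lf s i)) - {centre_at s}"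
        using y Lf by simp
      then obtain j where "j < b" "y = embed (Pd s i j)"
        using pendant_cases[OF \<open>i < l\<close>] by blast
      then show ?thesis
        using Lf model_neighbours_Lf[OF \<open>s < card {c, c'}\<close> \<open>i < l\<close>] by blast
    qed
  next
    case (Pd s i j)
    then have "s < card {c, c'}" "i < l" "j < b"
      using assms by simp_all
    then have "neighbours E (embed p) = {embed (Lf s i)}"
      using Pd pendant_leaf[OF centre_at_in_centres embed_Lf_in embed_Pd_in] by simp
    then show ?thesis
      using y Pd model_neighbours_Pd[OF \<open>s < card {c, c'}\<close> \<open>i < l\<close> \<open>j < b\<close>] by auto
  qed
qed

lemma embed_adj:
  assumes "p \<in> model" "q \<in> model"
  shows "E (embed p) (embed q) \<longleftrightarrow> model_adj (card {c, c'}) l b p q"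
proof
  assume "E (embed p) (embed q)"
  then have "embed q \<in> neighbours E (embed p)"
    by simp
  then have "embed q \<in> embed ` neighbours (model_adj (card {c, c'}) l b) p"
    by (rule subsetD[OF neighbours_embed[OF assms(1)]])
  then obtain r where r: "r \<in> neighbours (model_adj (card {c, c'}) l b) p" "embed q = embed r"
    by blast
  moreover have "r \<in> model"
    using r(1) model_neighbours_subset by blast
  ultimately have "q = r"
    using inj_on_eq_iff[OF inj_embed assms(2)] by simp
  then show "model_adj (card {c, c'}) l b p q"
    using r(1) by simp
next
  assume "model_adj (card {c, c'}) l b p q"
  then consider "model_adj0 p q" | "model_adj0 q p"
    unfolding model_adj_def by blast
  then show "E (embed p) (embed q)"
  proof cases
    case 1
    then show ?thesis
      by (rule model_adj0_embed[OF assms])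
  next
    case 2
    then show ?thesis
      by (rule edge_sym[OF model_adj0_embed[OF assms(2,1)]])
  qed
qed

lemma in_family: "in_family V E"
proof -
  have bij: "bij_betw embed model V"
    using inj_embed embed_image by (simp add: bij_betw_def)
  have adj: "model_adj (card {c, c'}) l b p q \<longleftrightarrow> E (embed p) (embed q)"
    if "p \<in> model" "q \<in> model" for p q
    using embed_adj[OF that] by simp
  have "E x y \<longleftrightarrow> model_adj (card {c, c'}) l b (inv_into model embed x) (inv_into model embed y)"
    if "x \<in> V" "y \<in> V" for x y
    using bij_betw_inv_into_rel[where R = "model_adj (card {c, c'}) l b" and S = E, OF bij adj that] .
  then have "\<exists>f. bij_betw f V model \<and>
      (\<forall>x\<in>V. \<forall>y\<in>V. E x y \<longleftrightarrow> model_adj (card {c, c'}) l b (f x) (f y))"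
    using bij_betw_inv_into[OF bij] by blast
  moreover have "(card {c, c'} = 1 \<and> 2 \<le> l) \<or> (card {c, c'} = 2 \<and> 1 \<le> l)"
    using star_middles middles_pos by (cases "c = c'") auto
  ultimately show ?thesis
    unfolding in_family_def using pendants_pos by blast
qed

end

lemma (in tree_graph) in_family_iff_family_shape:
  "in_family V E \<longleftrightarrow> (\<exists>c c' b l. family_shape V E c c' b l)"
proof
  assume "in_family V E"
  then obtain C l b f where b: "1 \<le> b" and C: "(C = 1 \<and> 2 \<le> l) \<or> (C = 2 \<and> 1 \<le> l)"
    and f: "bij_betw f V (model_verts C l b)"
    and adj: "\<forall>x \<in> V. \<forall>y \<in> V. E x y \<longleftrightarrow> model_adj C l b (f x) (f y)"
    unfolding in_family_def by blast
  have "E (inv_into V f p) (inv_into V f q) \<longleftrightarrow> model_adj C l b p q"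
    if "p \<in> model_verts C l b" "q \<in> model_verts C l b" for p q
    using bij_betw_inv_into_rel[where R = E and S = "model_adj C l b", OF f _ that] adj by simp
  from family_shape_embedded[OF bij_betw_inv_into[OF f] this b C]
  show "\<exists>c c' b l. family_shape V E c c' b l"
    by blast
next
  assume "\<exists>c c' b l. family_shape V E c c' b l"
  then obtain c c' b l where "family_shape V E c c' b l"
    by blast
  then show "in_family V E"
    by (rule family_shape.in_family)
qed

theorem theorem3p6:
  fixes V :: "'a set" and E :: "'a \<Rightarrow> 'a \<Rightarrow> bool" and n :: nat
  assumes "is_tree V E" and "card V = n"
  shows "num_status V E = 3 \<longleftrightarrow> in_family V E"
proof -
  interpret tree_graph V E
    using assms(1) tree_graph_iff_is_tree by blast
  show ?thesis
    using num_status_3_iff_family_shape in_family_iff_family_shape by simp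
qed

end
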